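(* Let $k_1,k_2$ be integers with $0<k_1\le 10$ and $0<k_2$, and let $f=f_{k_1,k_2}$. Then $g(f)=k_1$, $r(f)=k_2+1$, and consequently $s(f)=\min\left\{\frac{k_2+1}{2},\,k_1+1\right\}$.
   Context: Throughout, $d=10$ and $\mathbb{Z}_{10}$ is the ring of integers mod $10$. For integers $k_1,k_2>0$ define $f_{k_1,k_2}:\mathbb{Z}_{10}^{10+k_1+k_2}\to\mathbb{Z}_{10}$ by $f_{k_1,k_2}(x_0,\dots,x_{9+k_1+k_2}) = x_j + \sum_{i=10+k_1}^{9+k_1+k_2} x_i \bmod 10$, where $j=\left(\sum_{i=10}^{9+k_1}x_i\right)\bmod 10\in\{0,\dots,9\}$. For a function $f:\mathbb{Z}_d^k\to\mathbb{Z}_d$: the Hamming weight $H(\alpha)$ of $\alpha\in\mathbb{Z}_d^k$ is its number of nonzero coordinates. Fourier basis: $\chi_\alpha(x)=\exp\!\left(-2\pi\sqrt{-1}\,(x\cdot\alpha)/d\right)$ for $\alpha,x\in\mathbb{Z}_d^k$; every $Q:\mathbb{Z}_d^k\to\mathbb{R}$ has a unique expansion $Q=\sum_{\alpha}\hat Q_\alpha\chi_\alpha$. For $j\in\mathbb{Z}_d$ let $Q^{f,j}:\mathbb{Z}_d^k\to\{\pm1\}$, $Q^{f,j}(x)=1$ if $f(x)=j$ and $-1$ otherwise. The distributional complexity of $Q$ is $r(Q)=\min\{H(\alpha): \alpha\neq\vec 0,\ \hat Q_\alpha\neq 0\}$, and $r(f)=\min_{j\in\mathbb{Z}_d} r(Q^{f,j})$.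 Further, $g(f)$ is the least integer $\ell\ge 0$ such that there exist a set $S\subseteq[k]$ of $|S|=\ell$ coordinates, values $\alpha\in\mathbb{Z}_d^{\ell}$ and a modulus $\hat d$ with $2\le\hat d\le d$ such that the restriction $f_{|S,\alpha}:\mathbb{Z}_d^{k-\ell}\to\mathbb{Z}_d$ (fix the coordinates in $S$ to $\alpha$) is a linear function mod $\hat d$, i.e. there are integers $a_i,b$ with $f_{|S,\alpha}(y)\equiv b+\sum_i a_iy_i \pmod{\hat d}$ for all $y$ (elements of $\mathbb{Z}_d$ identified with $\{0,\dots,d-1\}$). Finally $s(f)=\min\{r(f)/2,\,g(f)+1\}$. *)

theory Defs
  imports Complex_Main
begin

text \<open>Throughout, d = 10.  Elements of Z_10^k are lists of length k with entries in {0..9};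
  elements of Z_10 are identified with {0,...,9}.\<close>

definition dd :: nat where "dd = 10"

definition vecs :: "nat \<Rightarrow> nat list set" where
  "vecs k = {xs. length xs = k \<and> set xs \<subseteq> {0..<dd}}"

definition zerovec :: "nat \<Rightarrow> nat list" where
  "zerovec k = replicate k 0"

definition hamming :: "nat list \<Rightarrow> nat" where
  "hamming \<alpha> = card {i. i < length \<alpha> \<and> \<alpha> ! i \<noteq> 0}"

definition dotp :: "nat list \<Rightarrow> nat list \<Rightarrow> nat" where
  "dotp x \<alpha> = (\<Sum>i<length x. x ! i * \<alpha> ! i)"

definition chi :: "nat list \<Rightarrow> nat list \<Rightarrow> complex" where
  "chi \<alpha> x = exp (- (2 * pi * \<i> * of_nat (dotp x \<alpha>)) / of_nat dd)"

definition fourier :: "nat \<Rightarrow> (nat list \<Rightarrow> real) \<Rightarrow> nat list \<Rightarrow> complex" where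
  "fourier k Q = (THE c. (\<forall>\<alpha>. \<alpha> \<notin> vecs k \<longrightarrow> c \<alpha> = 0) \<and>
      (\<forall>x\<in>vecs k. complex_of_real (Q x) = (\<Sum>\<alpha>\<in>vecs k. c \<alpha> * chi \<alpha> x)))"

definition Qfj :: "(nat list \<Rightarrow> nat) \<Rightarrow> nat \<Rightarrow> nat list \<Rightarrow> real" where
  "Qfj f j x = (if f x = j then 1 else -1)"

definition rQ :: "nat \<Rightarrow> (nat list \<Rightarrow> real) \<Rightarrow> nat" where
  "rQ k Q = Min {hamming \<alpha> | \<alpha>. \<alpha> \<in> vecs k \<and> \<alpha> \<noteq> zerovec k \<and> fourier k Q \<alpha> \<noteq> 0}"

definition rf :: "nat \<Rightarrow> (nat list \<Rightarrow> nat) \<Rightarrow> nat" where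
  "rf k f = Min {rQ k (Qfj f j) | j. j < dd}"

text \<open>The restriction to S fixed to alpha is expressed by quantifying over
  all x in Z_d^k agreeing with alpha on S.\<close>
definition gf :: "nat \<Rightarrow> (nat list \<Rightarrow> nat) \<Rightarrow> nat" where
  "gf k f = (LEAST l. \<exists>S (\<alpha>::nat \<Rightarrow> nat) (dh::nat) (a::nat \<Rightarrow> int) (b::int).
      S \<subseteq> {0..<k} \<and> card S = l \<and> (\<forall>i\<in>S. \<alpha> i < dd) \<and> 2 \<le> dh \<and> dh \<le> dd \<and>
      (\<forall>x\<in>vecs k. (\<forall>i\<in>S. x ! i = \<alpha> i) \<longrightarrow>
         int (f x) mod int dh = (b + (\<Sum>i\<in>{0..<k} - S. a i * int (x ! i))) mod int dh))"

definition sf :: "nat \<Rightarrow> (nat list \<Rightarrow> nat) \<Rightarrow> real" where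
  "sf k f = min (real (rf k f) / 2) (real (gf k f) + 1)"

definition fk :: "nat \<Rightarrow> nat \<Rightarrow> nat list \<Rightarrow> nat" where
  "fk k1 k2 x = (let j = (\<Sum>i=10..9+k1. x ! i) mod 10
                 in (x ! j + (\<Sum>i=10+k1..9+k1+k2. x ! i)) mod 10)"

end

theory Submission
  imports Defs "HOL-Analysis.Complex_Transcendental"
begin

(* The function f = f_{k1,k2} reads its k1 "selector" coordinates 10..9+k1, forms their
   sum j mod 10, and outputs x_j plus the sum of its k2 "tail" coordinates, mod 10.

   r(f) = k2 + 1.  After the standard Fourier facts on Z_10^n (orthogonality of the
   characters chi_alpha, and an explicit formula for the coefficients), the coefficient of
   Q^{f,j} at alpha <> 0 is a multiple of the character sum of alpha over the level set
   f = j.  Such sums are analysed by translations: translating by t changes the character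
   by chi_alpha(t), so a translation preserving the level set with chi_alpha(t) <> 1 kills
   the sum.  For weight <= k2, alpha either misses a tail coordinate (then all level sums
   agree and add up to 0) or is supported on the tail block (then a translation twists
   it).  The vector e_0 + (tail indicator) has weight k2 + 1 and nonzero level sums.

   Fixing the selector block to 0 makes f linear mod 10.  Fixing fewer than k1
   coordinates leaves a selector coordinate s and an input coordinate m < 10 free; varying
   x_s and x_m shows that no restriction is affine mod any dh >= 2. *)

definition w :: complex where "w = exp (- (2 * pi * \<i>) / 10)"

lemma chi_w: "chi \<alpha> x = w ^ dotp x \<alpha>"
proof -
  have "- (2 * pi * \<i> * of_nat (dotp x \<alpha>)) / of_nat dd = of_nat (dotp x \<alpha>) * (- (2 * pi * \<i>) / 10)"
    by (simp add: dd_def)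
  then show ?thesis unfolding chi_def w_def by (simp only: exp_of_nat_mult)
qed

lemma w_pow_10: "w ^ 10 = 1"
proof -
  have "w ^ 10 = exp (of_nat 10 * (- (2 * pi * \<i>) / 10))"
    unfolding w_def by (simp only: exp_of_nat_mult)
  also have "\<dots> = exp (- (2 * pi * \<i>))" by (simp add: mult_ac)
  also have "\<dots> = 1" by (simp add: exp_eq_1) (rule exI[of _ "-1"], simp)
  finally show ?thesis .
qed

lemma w_pow_mod: "w ^ k = w ^ (k mod 10)"
proof -
  have "w ^ k = (w ^ 10) ^ (k div 10) * w ^ (k mod 10)"
    by (metis mult_div_mod_eq power_add power_mult)
  then show ?thesis by (simp add: w_pow_10)
qed

lemma w_pow_ne_1:
  assumes "0 < g" "g < 10"
  shows "w ^ g \<noteq> 1"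
proof
  assume "w ^ g = 1"
  then have "exp (of_nat g * (- (2 * pi * \<i>) / 10)) = 1"
    unfolding w_def by (simp only: exp_of_nat_mult)
  then obtain n :: int where "- (2 * pi * real g / 10) = of_int (2 * n) * pi"
    by (auto simp: exp_eq_1 mult_ac)
  then have "pi * (- real g) = pi * (10 * real_of_int n)" by (simp add: field_simps)
  then have "- real g = 10 * real_of_int n"
    using pi_gt_zero mult_left_cancel[of pi "- real g" "10 * real_of_int n"] by linarith
  then have "- int g = 10 * n"
    by (metis of_int_eq_iff of_int_minus of_int_mult of_int_of_nat_eq of_int_numeral)
  with assms show False by presburger
qed

lemma cnj_w: "cnj w = w ^ 9"
proof -
  have "cnj w * w = exp (cnj (- (2 * pi * \<i>) / 10) + (- (2 * pi * \<i>) / 10))"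
    unfolding w_def by (simp only: exp_cnj exp_add)
  then have "cnj w * w = 1" by simp
  moreover have "w ^ 9 * w = 1" using w_pow_10 by (simp add: power_Suc2[symmetric])
  moreover have "w \<noteq> 0" by (simp add: w_def)
  ultimately show ?thesis by (metis mult_right_cancel)
qed

lemma root_sum: "g < 10 \<Longrightarrow> (\<Sum>a<10. w ^ (a * g)) = (if g = 0 then 10 else 0)"
proof (cases "g = 0")
  case False
  assume g: "g < 10"
  have "(\<Sum>a<10. w ^ (a * g)) = (\<Sum>a<10. (w ^ g) ^ a)"
    by (simp add: power_mult[symmetric] mult.commute)
  also have "\<dots> = ((w ^ g) ^ 10 - 1) / (w ^ g - 1)"
    using w_pow_ne_1 g False by (intro geometric_sum) simp
  also have "(w ^ g) ^ 10 = 1" by (metis power_mult power_one mult.commute w_pow_10)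
  finally show ?thesis using False by simp
qed simp

(* For digits, g - h (computed as g + 9h) vanishes mod 10 only if g = h. *)
lemma mod_ten_diff_zero:
  fixes g h :: nat
  assumes "g < 10" "h < 10"
  shows "(g + 9 * h) mod 10 = 0 \<longleftrightarrow> g = h"
proof (cases "h \<le> g")
  case True
  then have "g + 9 * h = (g - h) + 10 * h" by simp
  then have "(g + 9 * h) mod 10 = ((g - h) + 10 * h) mod 10" by (simp only:)
  also have "\<dots> = g - h" using assms by simp
  finally show ?thesis using True by simp
next
  case False
  have "g + 9 * h + 10 = (g + 10 - h) + 10 * h" using assms by simp
  then have "(g + 9 * h) mod 10 = ((g + 10 - h) + 10 * h) mod 10" by (metis mod_add_self2)
  also have "\<dots> = (g + 10 - h) mod 10" by (rule mod_mult_self2)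
  also have "\<dots> = g + 10 - h" using False by simp
  finally show ?thesis using False assms by simp
qed

lemma root_orth:
  assumes "g < 10" "h < 10"
  shows "(\<Sum>a<10. w ^ (a * g) * cnj (w ^ (a * h))) = (if g = h then 10 else 0)"
proof -
  have "w ^ (a * g) * cnj (w ^ (a * h)) = w ^ (a * ((g + 9 * h) mod 10))" for a
  proof -
    have "w ^ (a * g) * cnj (w ^ (a * h)) = w ^ (a * g + a * h * 9)"
      by (simp add: cnj_w power_mult[symmetric] power_add mult_ac)
    also have "a * g + a * h * 9 = a * (g + 9 * h)" by (simp add: algebra_simps)
    also have "w ^ (a * (g + 9 * h)) = w ^ (a * ((g + 9 * h) mod 10))"
      by (metis w_pow_mod mod_mult_right_eq)
    finally show ?thesis .
  qed
  then show ?thesis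
    using root_sum[of "(g + 9 * h) mod 10"] mod_ten_diff_zero[OF assms] by simp
qed

lemma vecs_length: "x \<in> vecs n \<Longrightarrow> length x = n"
  unfolding vecs_def by auto

lemma vecs_nth: "x \<in> vecs n \<Longrightarrow> i < n \<Longrightarrow> x ! i < 10"
  unfolding vecs_def dd_def by (auto dest!: nth_mem)

lemma finite_vecs: "finite (vecs n)"
proof -
  have "vecs n = {xs. set xs \<subseteq> {0..<dd} \<and> length xs = n}" unfolding vecs_def by auto
  then show ?thesis by (simp add: finite_lists_length_eq)
qed

lemma zerovec_vecs: "zerovec n \<in> vecs n"
  by (auto simp: vecs_def zerovec_def dd_def)

lemma sum_vecs_Suc: "(\<Sum>x\<in>vecs (Suc m). F x) = (\<Sum>a<10. \<Sum>xs\<in>vecs m. F (a # xs))"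
proof -
  have vecs_Suc: "vecs (Suc m) = (\<lambda>(a, xs). a # xs) ` ({..<10} \<times> vecs m)"
    unfolding vecs_def dd_def by (auto simp: length_Suc_conv image_iff)
  have "inj_on (\<lambda>(a, xs). a # xs) ({..<10::nat} \<times> vecs m)" by (auto simp: inj_on_def)
  then have "(\<Sum>x\<in>vecs (Suc m). F x) = (\<Sum>p\<in>{..<10} \<times> vecs m. F ((\<lambda>(a, xs). a # xs) p))"
    unfolding vecs_Suc by (rule sum.reindex[unfolded comp_def])
  also have "\<dots> = (\<Sum>a<10. \<Sum>xs\<in>vecs m. F (a # xs))"
    by (simp add: sum.cartesian_product split_def)
  finally show ?thesis .
qed

lemma dotp_Nil: "dotp [] \<alpha> = 0"
  unfolding dotp_def by simp

lemma dotp_Cons: "dotp (a # xs) (g # gs) = a * g + dotp xs gs"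
  unfolding dotp_def by (simp only: length_Cons sum.lessThan_Suc_shift) simp

definition unit_vec :: "nat \<Rightarrow> nat \<Rightarrow> nat \<Rightarrow> nat list" where
  "unit_vec n i c = map (\<lambda>l. if l = i then c else 0) [0..<n]"

lemma unit_vec_vecs: "c < 10 \<Longrightarrow> unit_vec n i c \<in> vecs n"
  by (auto simp: unit_vec_def vecs_def dd_def)

lemma unit_vec_nth: "l < n \<Longrightarrow> unit_vec n i c ! l = (if l = i then c else 0)"
  by (simp add: unit_vec_def)

lemma dotp_unit_vec: "i < n \<Longrightarrow> dotp (unit_vec n i c) \<alpha> = c * \<alpha> ! i"
proof -
  assume i: "i < n"
  have "dotp (unit_vec n i c) \<alpha> = (\<Sum>l<n. if l = i then c * \<alpha> ! i else 0)"
    unfolding dotp_def by (intro sum.cong) (auto simp: unit_vec_def)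
  then show ?thesis using i by simp
qed

lemma chi_swap: "length \<alpha> = length x \<Longrightarrow> chi \<alpha> x = chi x \<alpha>"
  unfolding chi_def dotp_def by (simp add: mult.commute)

lemma char_orth:
  "\<alpha> \<in> vecs n \<Longrightarrow> \<beta> \<in> vecs n \<Longrightarrow>
    (\<Sum>x\<in>vecs n. chi \<alpha> x * cnj (chi \<beta> x)) = (if \<alpha> = \<beta> then 10 ^ n else 0)"
proof (induction \<alpha> arbitrary: n \<beta>)
  case Nil
  then have "n = 0" "\<beta> = []" by (auto simp: vecs_def)
  moreover have "vecs 0 = {[]}" by (auto simp: vecs_def)
  ultimately show ?case by (simp add: chi_w dotp_Nil)
next
  case (Cons g gs)
  obtain m h hs where n: "n = Suc m" and \<beta>: "\<beta> = h # hs"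
    using Cons.prems by (cases n; cases \<beta>) (auto simp: vecs_def)
  have gs: "gs \<in> vecs m" "g < 10" and hs: "hs \<in> vecs m" "h < 10"
    using Cons.prems by (auto simp: n \<beta> vecs_def dd_def)
  have "(\<Sum>x\<in>vecs n. chi (g # gs) x * cnj (chi \<beta> x))
      = (\<Sum>a<10. \<Sum>xs\<in>vecs m. (w ^ (a * g) * cnj (w ^ (a * h))) * (chi gs xs * cnj (chi hs xs)))"
    unfolding n \<beta> sum_vecs_Suc by (simp add: chi_w dotp_Cons power_add mult_ac)
  also have "\<dots> = (\<Sum>a<10. w ^ (a * g) * cnj (w ^ (a * h))) * (\<Sum>xs\<in>vecs m. chi gs xs * cnj (chi hs xs))"
    by (simp add: sum_product)
  also have "\<dots> = (if g # gs = \<beta> then 10 ^ n else 0)"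
    using Cons.IH[OF gs(1) hs(1)] root_orth[OF gs(2) hs(2)] by (simp add: n \<beta>)
  finally show ?case .
qed

lemma char_orth_dual:
  assumes "x \<in> vecs n" "y \<in> vecs n"
  shows "(\<Sum>\<alpha>\<in>vecs n. chi \<alpha> x * cnj (chi \<alpha> y)) = (if x = y then 10 ^ n else 0)"
proof -
  have "(\<Sum>\<alpha>\<in>vecs n. chi \<alpha> x * cnj (chi \<alpha> y)) = (\<Sum>\<alpha>\<in>vecs n. chi x \<alpha> * cnj (chi y \<alpha>))"
    using assms by (intro sum.cong refl) (simp add: chi_swap vecs_length)
  then show ?thesis using char_orth[OF assms] by simp
qed

lemma char_sum_all:
  assumes "\<gamma> \<in> vecs n"
  shows "(\<Sum>x\<in>vecs n. w ^ dotp x \<gamma>) = (if \<gamma> = zerovec n then 10 ^ n else 0)"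
proof -
  have "chi (zerovec n) x = 1" if "x \<in> vecs n" for x
    using that by (simp add: chi_w dotp_def zerovec_def vecs_length)
  then have "(\<Sum>x\<in>vecs n. w ^ dotp x \<gamma>) = (\<Sum>x\<in>vecs n. chi \<gamma> x * cnj (chi (zerovec n) x))"
    by (intro sum.cong refl) (simp add: chi_w)
  then show ?thesis using char_orth[OF assms zerovec_vecs] by simp
qed

definition fourier_coeff :: "nat \<Rightarrow> (nat list \<Rightarrow> real) \<Rightarrow> nat list \<Rightarrow> complex" where
  "fourier_coeff n Q \<alpha> =
     (if \<alpha> \<in> vecs n then (\<Sum>y\<in>vecs n. of_real (Q y) * cnj (chi \<alpha> y)) / 10 ^ n else 0)"

lemma fourier_coeff_expansion:
  assumes x: "x \<in> vecs n"
  shows "complex_of_real (Q x) = (\<Sum>\<alpha>\<in>vecs n. fourier_coeff n Q \<alpha> * chi \<alpha> x)"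
proof -
  have "(\<Sum>\<alpha>\<in>vecs n. fourier_coeff n Q \<alpha> * chi \<alpha> x)
      = (\<Sum>\<alpha>\<in>vecs n. \<Sum>y\<in>vecs n. of_real (Q y) * (chi \<alpha> x * cnj (chi \<alpha> y)) / 10 ^ n)"
    by (intro sum.cong refl) (simp add: fourier_coeff_def sum_divide_distrib sum_distrib_left mult_ac)
  also have "\<dots> = (\<Sum>y\<in>vecs n. of_real (Q y) * (\<Sum>\<alpha>\<in>vecs n. chi \<alpha> x * cnj (chi \<alpha> y)) / 10 ^ n)"
    by (subst sum.swap) (simp add: sum_divide_distrib sum_distrib_left)
  also have "\<dots> = (\<Sum>y\<in>vecs n. if x = y then of_real (Q y) else 0)"
    using x by (intro sum.cong refl) (simp add: char_orth_dual)
  also have "\<dots> = of_real (Q x)" using x finite_vecs by simp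
  finally show ?thesis by simp
qed

lemma fourier_coeff_unique:
  assumes c: "\<forall>x\<in>vecs n. complex_of_real (Q x) = (\<Sum>\<alpha>\<in>vecs n. c \<alpha> * chi \<alpha> x)"
    and \<beta>: "\<beta> \<in> vecs n"
  shows "c \<beta> = fourier_coeff n Q \<beta>"
proof -
  have "(\<Sum>y\<in>vecs n. of_real (Q y) * cnj (chi \<beta> y))
      = (\<Sum>y\<in>vecs n. (\<Sum>\<alpha>\<in>vecs n. c \<alpha> * chi \<alpha> y) * cnj (chi \<beta> y))"
    using c by (intro sum.cong refl) simp
  also have "\<dots> = (\<Sum>y\<in>vecs n. \<Sum>\<alpha>\<in>vecs n. c \<alpha> * (chi \<alpha> y * cnj (chi \<beta> y)))"
    by (simp add: sum_distrib_right mult.assoc)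
  also have "\<dots> = (\<Sum>\<alpha>\<in>vecs n. c \<alpha> * (\<Sum>y\<in>vecs n. chi \<alpha> y * cnj (chi \<beta> y)))"
    by (subst sum.swap) (simp add: sum_distrib_left)
  also have "\<dots> = (\<Sum>\<alpha>\<in>vecs n. if \<alpha> = \<beta> then c \<alpha> * 10 ^ n else 0)"
    using \<beta> by (intro sum.cong refl) (simp add: char_orth)
  also have "\<dots> = c \<beta> * 10 ^ n" using \<beta> finite_vecs by simp
  finally show ?thesis using \<beta> by (simp add: fourier_coeff_def)
qed

lemma fourier_eq_coeff: "fourier n Q = fourier_coeff n Q"
  unfolding fourier_def
proof (rule the_equality)
  show "(\<forall>\<alpha>. \<alpha> \<notin> vecs n \<longrightarrow> fourier_coeff n Q \<alpha> = 0) \<and>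
      (\<forall>x\<in>vecs n. complex_of_real (Q x) = (\<Sum>\<alpha>\<in>vecs n. fourier_coeff n Q \<alpha> * chi \<alpha> x))"
    by (simp add: fourier_coeff_def fourier_coeff_expansion)
next
  fix c
  assume c: "(\<forall>\<alpha>. \<alpha> \<notin> vecs n \<longrightarrow> c \<alpha> = 0) \<and>
      (\<forall>x\<in>vecs n. complex_of_real (Q x) = (\<Sum>\<alpha>\<in>vecs n. c \<alpha> * chi \<alpha> x))"
  show "c = fourier_coeff n Q"
  proof
    fix \<beta>
    show "c \<beta> = fourier_coeff n Q \<beta>"
    proof (cases "\<beta> \<in> vecs n")
      case True
      then show ?thesis using c fourier_coeff_unique by blast
    next
      case False
      then show ?thesis using c by (simp add: fourier_coeff_def)
    qed
  qed
qed

definition char_sum :: "nat \<Rightarrow> (nat list \<Rightarrow> bool) \<Rightarrow> nat list \<Rightarrow> complex" where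
  "char_sum n P \<alpha> = (\<Sum>x\<in>vecs n. if P x then w ^ dotp x \<alpha> else 0)"

lemma char_sum_cong: "(\<And>x. x \<in> vecs n \<Longrightarrow> P x = P' x) \<Longrightarrow> char_sum n P \<alpha> = char_sum n P' \<alpha>"
  unfolding char_sum_def by (intro sum.cong refl) simp

lemma char_sum_split:
  "char_sum n P \<alpha> = char_sum n (\<lambda>x. P x \<and> R x) \<alpha> + char_sum n (\<lambda>x. P x \<and> \<not> R x) \<alpha>"
  unfolding char_sum_def sum.distrib[symmetric] by (intro sum.cong refl) auto

lemma fourier_Qfj:
  assumes \<alpha>: "\<alpha> \<in> vecs n" "\<alpha> \<noteq> zerovec n"
  shows "fourier n (Qfj f j) \<alpha> = cnj (2 * char_sum n (\<lambda>x. f x = j) \<alpha>) / 10 ^ n"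
proof -
  have "(\<Sum>y\<in>vecs n. of_real (Qfj f j y) * chi \<alpha> y)
      = (\<Sum>y\<in>vecs n. 2 * (if f y = j then w ^ dotp y \<alpha> else 0) - w ^ dotp y \<alpha>)"
    by (intro sum.cong refl) (simp add: Qfj_def chi_w)
  also have "\<dots> = 2 * char_sum n (\<lambda>x. f x = j) \<alpha> - (\<Sum>y\<in>vecs n. w ^ dotp y \<alpha>)"
    by (simp add: sum_subtractf char_sum_def sum_distrib_left)
  also have "(\<Sum>y\<in>vecs n. w ^ dotp y \<alpha>) = 0"
    using char_sum_all[OF \<alpha>(1)] \<alpha>(2) by simp
  finally have "(\<Sum>y\<in>vecs n. of_real (Qfj f j y) * chi \<alpha> y) = 2 * char_sum n (\<lambda>x. f x = j) \<alpha>"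
    by simp
  moreover have "(\<Sum>y\<in>vecs n. of_real (Qfj f j y) * cnj (chi \<alpha> y))
      = cnj (\<Sum>y\<in>vecs n. of_real (Qfj f j y) * chi \<alpha> y)"
    by simp
  ultimately show ?thesis using \<alpha>(1) by (simp add: fourier_eq_coeff fourier_coeff_def)
qed

lemma char_sum_levels:
  fixes f :: "nat list \<Rightarrow> nat"
  assumes "\<forall>x\<in>vecs n. f x < 10"
  shows "(\<Sum>j<10. char_sum n (\<lambda>x. f x = j) \<alpha>) = (\<Sum>x\<in>vecs n. w ^ dotp x \<alpha>)"
proof -
  have "(\<Sum>j<10. char_sum n (\<lambda>x. f x = j) \<alpha>)
      = (\<Sum>x\<in>vecs n. \<Sum>j<10. if f x = j then w ^ dotp x \<alpha> else 0)"
    unfolding char_sum_def by (rule sum.swap)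
  also have "\<dots> = (\<Sum>x\<in>vecs n. w ^ dotp x \<alpha>)"
    using assms by (intro sum.cong refl) simp
  finally show ?thesis .
qed

definition translate :: "nat list \<Rightarrow> nat list \<Rightarrow> nat list" where
  "translate t x = map (\<lambda>i. (x ! i + t ! i) mod 10) [0..<length x]"

lemma translate_length [simp]: "length (translate t x) = length x"
  by (simp add: translate_def)

lemma translate_nth: "i < length x \<Longrightarrow> translate t x ! i = (x ! i + t ! i) mod 10"
  by (simp add: translate_def)

lemma translate_vecs: "x \<in> vecs n \<Longrightarrow> translate t x \<in> vecs n"
  by (auto simp: vecs_def translate_def dd_def)

lemma digit_add_cancel:
  fixes a b c :: nat
  assumes "(a + c) mod 10 = (b + c) mod 10" "a < 10" "b < 10"
  shows "a = b"
proof -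
  have "int a mod 10 = ((int a + int c) mod 10 - int c) mod 10" by (simp add: mod_diff_left_eq)
  also have "(int a + int c) mod 10 = (int b + int c) mod 10"
    using assms(1) by (metis of_nat_add of_nat_numeral zmod_int)
  also have "((int b + int c) mod 10 - int c) mod 10 = int b mod 10" by (simp add: mod_diff_left_eq)
  finally show ?thesis using assms(2,3) by simp
qed

lemma mod_shift_eq:
  fixes f c :: nat
  assumes "f < 10" "c < 10"
  shows "(f + c) mod 10 = c \<longleftrightarrow> f = 0"
proof
  assume "(f + c) mod 10 = c"
  then have "(f + c) mod 10 = (0 + c) mod 10" using assms(2) by simp
  then show "f = 0" using assms(1) by (rule digit_add_cancel) simp
qed (use assms(2) in simp)

lemma translate_inj: "inj_on (translate t) (vecs n)"
proof (rule inj_onI)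
  fix x y assume x: "x \<in> vecs n" and y: "y \<in> vecs n" and eq: "translate t x = translate t y"
  show "x = y"
  proof (rule nth_equalityI)
    show len: "length x = length y" using x y by (simp add: vecs_length)
    fix i assume i: "i < length x"
    have "(x ! i + t ! i) mod 10 = (y ! i + t ! i) mod 10"
      using arg_cong[OF eq, of "\<lambda>l. l ! i"] i len by (simp add: translate_nth)
    moreover have "x ! i < 10" "y ! i < 10" using x y i len by (auto simp: vecs_length vecs_nth)
    ultimately show "x ! i = y ! i" by (rule digit_add_cancel)
  qed
qed

(* Translation is a bijection of Z_10^n, so sums over Z_10^n are invariant under it. *)
lemma sum_translate: "(\<Sum>x\<in>vecs n. F (translate t x)) = (\<Sum>x\<in>vecs n. F x)"
proof -
  have "translate t ` vecs n = vecs n"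
    using finite_vecs translate_vecs translate_inj by (intro endo_inj_surj) auto
  then show ?thesis using sum.reindex[OF translate_inj, of F t n] by simp
qed

lemma w_dotp_translate:
  assumes "length t = length x"
  shows "w ^ dotp (translate t x) \<alpha> = w ^ dotp x \<alpha> * w ^ dotp t \<alpha>"
proof -
  have "dotp (translate t x) \<alpha> mod 10 = (\<Sum>i<length x. (x ! i + t ! i) mod 10 * \<alpha> ! i mod 10) mod 10"
    unfolding dotp_def by (simp add: translate_nth mod_sum_eq)
  also have "\<dots> = (\<Sum>i<length x. (x ! i + t ! i) * \<alpha> ! i) mod 10"
    by (simp add: mod_mult_left_eq mod_sum_eq)
  also have "(\<Sum>i<length x. (x ! i + t ! i) * \<alpha> ! i) = dotp x \<alpha> + dotp t \<alpha>"
    unfolding dotp_def using assms by (simp add: algebra_simps sum.distrib)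
  finally have "w ^ dotp (translate t x) \<alpha> = w ^ (dotp x \<alpha> + dotp t \<alpha>)"
    by (metis w_pow_mod)
  then show ?thesis by (simp add: power_add)
qed

lemma char_sum_translate:
  assumes t: "t \<in> vecs n"
  shows "char_sum n P \<alpha> = w ^ dotp t \<alpha> * char_sum n (\<lambda>x. P (translate t x)) \<alpha>"
proof -
  have "char_sum n P \<alpha>
      = (\<Sum>x\<in>vecs n. if P (translate t x) then w ^ dotp (translate t x) \<alpha> else 0)"
    unfolding char_sum_def by (rule sum_translate[symmetric])
  also have "\<dots> = (\<Sum>x\<in>vecs n. w ^ dotp t \<alpha> * (if P (translate t x) then w ^ dotp x \<alpha> else 0))"
    using t by (intro sum.cong refl) (simp add: w_dotp_translate vecs_length mult.commute)
  finally show ?thesis by (simp add: char_sum_def sum_distrib_left)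
qed

lemma char_sum_vanish:
  assumes t: "t \<in> vecs n"
    and inv: "\<forall>x\<in>vecs n. P (translate t x) = P x"
    and twist: "w ^ dotp t \<alpha> \<noteq> 1"
  shows "char_sum n P \<alpha> = 0"
proof -
  have "char_sum n (\<lambda>x. P (translate t x)) \<alpha> = char_sum n P \<alpha>"
    using inv unfolding char_sum_def by (intro sum.cong refl) simp
  then have "(w ^ dotp t \<alpha> - 1) * char_sum n P \<alpha> = 0"
    using char_sum_translate[OF t, of P \<alpha>] by (simp add: algebra_simps)
  then show ?thesis using twist by simp
qed

definition selector :: "nat \<Rightarrow> nat list \<Rightarrow> nat" where
  "selector k1 x = (\<Sum>i=10..9+k1. x ! i) mod 10"

lemma fk_selector: "fk k1 k2 x = (x ! selector k1 x + (\<Sum>i=10+k1..9+k1+k2. x ! i)) mod 10"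
  by (simp add: fk_def selector_def Let_def)

lemma selector_lt: "selector k1 x < 10"
  by (simp add: selector_def)

lemma fk_lt: "fk k1 k2 x < 10"
  by (simp add: fk_selector)

lemma sum_translate_mod:
  assumes "length x = n" "S \<subseteq> {..<n}"
  shows "(\<Sum>i\<in>S. translate t x ! i) mod 10 = ((\<Sum>i\<in>S. x ! i) + (\<Sum>i\<in>S. t ! i)) mod 10"
proof -
  have "(\<Sum>i\<in>S. translate t x ! i) = (\<Sum>i\<in>S. (x ! i + t ! i) mod 10)"
    using assms by (intro sum.cong refl) (auto simp: translate_nth)
  then have "(\<Sum>i\<in>S. translate t x ! i) mod 10 = (\<Sum>i\<in>S. x ! i + t ! i) mod 10"
    by (simp add: mod_sum_eq)
  then show ?thesis by (simp add: sum.distrib)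
qed

lemma selector_translate:
  assumes "length x = 10 + k1 + k2" "\<forall>i\<in>{10..9+k1}. t ! i = 0"
  shows "selector k1 (translate t x) = selector k1 x"
proof -
  have "(\<Sum>i=10..9+k1. translate t x ! i) mod 10 = ((\<Sum>i=10..9+k1. x ! i) + (\<Sum>i=10..9+k1. t ! i)) mod 10"
    by (rule sum_translate_mod[OF assms(1)]) auto
  moreover have "(\<Sum>i=10..9+k1. t ! i) = 0" using assms(2) by simp
  ultimately show ?thesis by (simp add: selector_def)
qed

lemma fk_translate:
  assumes x: "length x = 10 + k1 + k2" and t: "\<forall>i\<in>{10..9+k1}. t ! i = 0"
  shows "fk k1 k2 (translate t x)
       = (fk k1 k2 x + t ! selector k1 x + (\<Sum>i=10+k1..9+k1+k2. t ! i)) mod 10"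
proof -
  let ?J = "selector k1 x"
  let ?X = "\<Sum>i=10+k1..9+k1+k2. x ! i"
  let ?T = "\<Sum>i=10+k1..9+k1+k2. t ! i"
  have J: "?J < length x" using selector_lt[of k1 x] x by simp
  have tail: "(\<Sum>i=10+k1..9+k1+k2. translate t x ! i) mod 10 = (?X + ?T) mod 10"
    by (rule sum_translate_mod[OF x]) auto
  have "fk k1 k2 (translate t x)
      = ((x ! ?J + t ! ?J) mod 10 + (\<Sum>i=10+k1..9+k1+k2. translate t x ! i)) mod 10"
    unfolding fk_selector selector_translate[OF x t] using J by (simp add: translate_nth)
  also have "\<dots> = (x ! ?J + t ! ?J + (\<Sum>i=10+k1..9+k1+k2. translate t x ! i) mod 10) mod 10"
    by (simp only: mod_add_left_eq mod_add_right_eq)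
  also have "\<dots> = (x ! ?J + t ! ?J + (?X + ?T)) mod 10"
    unfolding tail by (simp only: mod_add_right_eq)
  also have "\<dots> = ((x ! ?J + ?X) + (t ! ?J + ?T)) mod 10"
    by (simp only: add_ac)
  also have "\<dots> = ((x ! ?J + ?X) mod 10 + (t ! ?J + ?T)) mod 10"
    by (simp only: mod_add_left_eq)
  also have "\<dots> = (fk k1 k2 x + t ! ?J + ?T) mod 10"
    by (simp only: fk_selector add.assoc)
  finally show ?thesis .
qed

(* If alpha misses a tail coordinate i0, translating along i0 moves level set 0 onto
   level set c without changing the character, so all level sums agree. *)
lemma fk_levels_equal:
  assumes i0: "i0 \<in> {10+k1..9+k1+k2}" "\<alpha> ! i0 = 0" and c: "c < 10"
  shows "char_sum (10+k1+k2) (\<lambda>x. fk k1 k2 x = c) \<alpha> = char_sum (10+k1+k2) (\<lambda>x. fk k1 k2 x = 0) \<alpha>"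
proof -
  let ?n = "10 + k1 + k2"
  let ?t = "unit_vec ?n i0 c"
  have t: "?t \<in> vecs ?n" using c by (rule unit_vec_vecs)
  have t_nth: "?t ! i = (if i = i0 then c else 0)" if "i < ?n" for i
    using that by (rule unit_vec_nth)
  have sel: "\<forall>i\<in>{10..9+k1}. ?t ! i = 0" using i0 by (auto simp: t_nth)
  have "?t ! selector k1 x = 0" for x using i0 selector_lt[of k1 x] by (auto simp: t_nth)
  moreover have "(\<Sum>i=10+k1..9+k1+k2. ?t ! i) = (\<Sum>i=10+k1..9+k1+k2. if i = i0 then c else 0)"
    by (intro sum.cong refl) (auto simp: t_nth)
  moreover have "\<dots> = c" using i0 by simp
  ultimately have shift: "fk k1 k2 (translate ?t x) = (fk k1 k2 x + c) mod 10" if "x \<in> vecs ?n" for x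
    using fk_translate[OF vecs_length[OF that] sel] by simp
  have "dotp ?t \<alpha> = 0" using i0 by (simp add: dotp_unit_vec)
  then have "char_sum ?n (\<lambda>x. fk k1 k2 x = c) \<alpha> = char_sum ?n (\<lambda>x. fk k1 k2 (translate ?t x) = c) \<alpha>"
    using char_sum_translate[OF t, of "\<lambda>x. fk k1 k2 x = c" \<alpha>] by simp
  also have "\<dots> = char_sum ?n (\<lambda>x. fk k1 k2 x = 0) \<alpha>"
    using shift mod_shift_eq[OF fk_lt c] by (intro char_sum_cong) simp
  finally show ?thesis .
qed

(* Since the ten level sums add up to the full (vanishing) character sum,
   each of them is zero. *)
lemma fk_level_free_tail:
  assumes \<alpha>: "\<alpha> \<in> vecs (10+k1+k2)" "\<alpha> \<noteq> zerovec (10+k1+k2)"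
    and i0: "i0 \<in> {10+k1..9+k1+k2}" "\<alpha> ! i0 = 0" and j: "j < 10"
  shows "char_sum (10+k1+k2) (\<lambda>x. fk k1 k2 x = j) \<alpha> = 0"
proof -
  let ?n = "10 + k1 + k2"
  let ?S0 = "char_sum ?n (\<lambda>x. fk k1 k2 x = 0) \<alpha>"
  have "(\<Sum>c<10. char_sum ?n (\<lambda>x. fk k1 k2 x = c) \<alpha>) = (\<Sum>x\<in>vecs ?n. w ^ dotp x \<alpha>)"
    by (rule char_sum_levels) (simp add: fk_lt)
  also have "\<dots> = 0" using char_sum_all[OF \<alpha>(1)] \<alpha>(2) by simp
  finally have "(\<Sum>c<10. char_sum ?n (\<lambda>x. fk k1 k2 x = c) \<alpha>) = 0" .
  moreover have "(\<Sum>c<10. char_sum ?n (\<lambda>x. fk k1 k2 x = c) \<alpha>) = (\<Sum>c<(10::nat). ?S0)"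
    by (intro sum.cong refl) (rule fk_levels_equal[OF i0], simp)
  moreover have "(\<Sum>c<(10::nat). ?S0) = 10 * ?S0" by simp
  ultimately have "?S0 = 0" by simp
  then show ?thesis using fk_levels_equal[OF i0 j] by simp
qed

(* If alpha is supported on the tail block, adding -1 to all ten inputs and +1 to the
   first tail coordinate leaves f invariant but twists the character. *)
lemma fk_level_tail_support:
  assumes \<alpha>: "\<alpha> \<in> vecs (10+k1+k2)" and k2: "0 < k2"
    and off: "\<forall>i<10+k1+k2. i \<notin> {10+k1..9+k1+k2} \<longrightarrow> \<alpha> ! i = 0"
    and nz: "\<alpha> ! (10+k1) \<noteq> 0"
  shows "char_sum (10+k1+k2) (\<lambda>x. fk k1 k2 x = j) \<alpha> = 0"
proof (rule char_sum_vanish)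
  let ?n = "10 + k1 + k2"
  define t where "t = map (\<lambda>i. if i < 10 then 9 else if i = 10 + k1 then 1 else (0::nat)) [0..<?n]"
  show t: "t \<in> vecs ?n" by (auto simp: t_def vecs_def dd_def)
  have sel: "\<forall>i\<in>{10..9+k1}. t ! i = 0" by (auto simp: t_def)
  have "t ! selector k1 x = 9" for x using selector_lt[of k1 x] by (auto simp: t_def)
  moreover have "(\<Sum>i=10+k1..9+k1+k2. t ! i) = (\<Sum>i=10+k1..9+k1+k2. if i = 10 + k1 then 1 else 0)"
    by (intro sum.cong refl) (auto simp: t_def)
  moreover have "\<dots> = 1" using k2 by simp
  ultimately show "\<forall>x\<in>vecs ?n. (fk k1 k2 (translate t x) = j) = (fk k1 k2 x = j)"
    using fk_translate[OF vecs_length sel] fk_lt by simp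
  have "dotp t \<alpha> = (\<Sum>i<?n. if i = 10 + k1 then \<alpha> ! (10 + k1) else 0)"
    unfolding dotp_def using off by (intro sum.cong) (auto simp: t_def)
  also have "\<dots> = \<alpha> ! (10 + k1)" using k2 by simp
  finally show "w ^ dotp t \<alpha> \<noteq> 1"
    using w_pow_ne_1 nz vecs_nth[OF \<alpha>, of "10 + k1"] k2 by simp
qed

(* Every nonzero alpha of weight at most k2 falls under one of the two cases above,
   so its level sums vanish. *)
lemma fk_level_low_weight:
  assumes \<alpha>: "\<alpha> \<in> vecs (10+k1+k2)" "\<alpha> \<noteq> zerovec (10+k1+k2)"
    and h: "hamming \<alpha> \<le> k2" and k2: "0 < k2" and j: "j < 10"
  shows "char_sum (10+k1+k2) (\<lambda>x. fk k1 k2 x = j) \<alpha> = 0"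
proof (cases "\<exists>i0\<in>{10+k1..9+k1+k2}. \<alpha> ! i0 = 0")
  case True
  then show ?thesis using fk_level_free_tail[OF \<alpha> _ _ j] by blast
next
  case False
  let ?tail = "{10+k1..9+k1+k2}"
  let ?supp = "{i. i < length \<alpha> \<and> \<alpha> ! i \<noteq> 0}"
  have len: "length \<alpha> = 10+k1+k2" using \<alpha>(1) by (rule vecs_length)
  have sub: "?tail \<subseteq> ?supp" using False len by auto
  moreover have "card ?tail = k2" by simp
  then have "card ?supp \<le> card ?tail" using h by (simp only: hamming_def)
  moreover have "card ?tail \<le> card ?supp" using sub by (intro card_mono) auto
  ultimately have "?tail = ?supp" by (intro card_subset_eq) auto
  then have "\<forall>i<10+k1+k2. i \<notin> ?tail \<longrightarrow> \<alpha> ! i = 0" using len by auto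
  moreover have "\<alpha> ! (10+k1) \<noteq> 0" using False k2 by auto
  ultimately show ?thesis using fk_level_tail_support[OF \<alpha>(1) k2] by blast
qed

definition astar :: "nat \<Rightarrow> nat \<Rightarrow> nat list" where
  "astar k1 k2 = map (\<lambda>i. if i = 0 \<or> i \<in> {10+k1..9+k1+k2} then 1 else (0::nat)) [0..<10+k1+k2]"

lemma astar_vecs: "astar k1 k2 \<in> vecs (10+k1+k2)"
  by (auto simp: astar_def vecs_def dd_def)

lemma astar_nonzero: "astar k1 k2 \<noteq> zerovec (10+k1+k2)"
proof
  assume "astar k1 k2 = zerovec (10+k1+k2)"
  then have "astar k1 k2 ! 0 = zerovec (10+k1+k2) ! 0" by simp
  then show False by (simp add: astar_def zerovec_def del: upt_Suc)
qed

lemma hamming_astar: "hamming (astar k1 k2) = k2 + 1"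
proof -
  have "{i. i < length (astar k1 k2) \<and> astar k1 k2 ! i \<noteq> 0} = insert 0 {10+k1..9+k1+k2}"
    by (auto simp: astar_def split: if_splits)
  then show ?thesis unfolding hamming_def by simp
qed

lemma dotp_astar:
  assumes "length x = 10 + k1 + k2"
  shows "dotp x (astar k1 k2) = x ! 0 + (\<Sum>i=10+k1..9+k1+k2. x ! i)"
proof -
  have "dotp x (astar k1 k2) = (\<Sum>i\<in>{..<10+k1+k2} \<inter> insert 0 {10+k1..9+k1+k2}. x ! i)"
    unfolding dotp_def assms sum.inter_restrict[OF finite_lessThan]
    by (intro sum.cong refl) (auto simp: astar_def)
  also have "{..<10+k1+k2} \<inter> insert 0 {10+k1..9+k1+k2} = insert 0 {10+k1..9+k1+k2}" by auto
  finally show ?thesis by simp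
qed

(* Where the selector is nonzero, shifting x_0 by 1 preserves f but multiplies the
   character of alpha* by w, so this part of the level sum vanishes. *)
lemma astar_active_selector:
  "char_sum (10+k1+k2) (\<lambda>x. fk k1 k2 x = j \<and> selector k1 x \<noteq> 0) (astar k1 k2) = 0"
proof (rule char_sum_vanish)
  let ?n = "10 + k1 + k2"
  let ?t = "unit_vec ?n 0 1"
  show "?t \<in> vecs ?n" by (simp add: unit_vec_vecs)
  have sel: "\<forall>i\<in>{10..9+k1}. ?t ! i = 0" by (auto simp: unit_vec_nth)
  have tail: "(\<Sum>i=10+k1..9+k1+k2. ?t ! i) = 0" by (auto simp: unit_vec_nth)
  show "\<forall>x\<in>vecs ?n. (fk k1 k2 (translate ?t x) = j \<and> selector k1 (translate ?t x) \<noteq> 0)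
      = (fk k1 k2 x = j \<and> selector k1 x \<noteq> 0)"
  proof
    fix x assume "x \<in> vecs ?n"
    then have x: "length x = ?n" by (rule vecs_length)
    have "selector k1 x \<noteq> 0 \<Longrightarrow> ?t ! selector k1 x = 0"
      using selector_lt[of k1 x] by (simp add: unit_vec_nth)
    then show "(fk k1 k2 (translate ?t x) = j \<and> selector k1 (translate ?t x) \<noteq> 0)
      = (fk k1 k2 x = j \<and> selector k1 x \<noteq> 0)"
      using fk_translate[OF x sel] selector_translate[OF x sel] tail fk_lt[of k1 k2 x] by auto
  qed
  show "w ^ dotp ?t (astar k1 k2) \<noteq> 1"
    using w_pow_ne_1[of 1] by (simp add: dotp_unit_vec astar_def)
qed

(* Where the selector is 0, f(x) = x . alpha* mod 10, so the character is constant w^j. *)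
lemma astar_idle_selector:
  "char_sum (10+k1+k2) (\<lambda>x. fk k1 k2 x = j \<and> selector k1 x = 0) (astar k1 k2)
     = w ^ j * of_nat (card {x \<in> vecs (10+k1+k2). fk k1 k2 x = j \<and> selector k1 x = 0})"
proof -
  let ?n = "10 + k1 + k2"
  have "w ^ dotp x (astar k1 k2) = w ^ fk k1 k2 x" if "x \<in> vecs ?n" "selector k1 x = 0" for x
    using that w_pow_mod[of "dotp x (astar k1 k2)"]
    by (simp add: fk_selector dotp_astar vecs_length)
  then have "char_sum ?n (\<lambda>x. fk k1 k2 x = j \<and> selector k1 x = 0) (astar k1 k2)
      = (\<Sum>x\<in>vecs ?n. if fk k1 k2 x = j \<and> selector k1 x = 0 then w ^ j else 0)"
    unfolding char_sum_def by (intro sum.cong refl) auto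
  also have "\<dots> = w ^ j * of_nat (card {x \<in> vecs ?n. fk k1 k2 x = j \<and> selector k1 x = 0})"
    by (simp add: sum.If_cases finite_vecs Int_def mult.commute)
  finally show ?thesis .
qed

lemma astar_level_nonzero:
  assumes j: "j < 10"
  shows "char_sum (10+k1+k2) (\<lambda>x. fk k1 k2 x = j) (astar k1 k2) \<noteq> 0"
proof -
  let ?n = "10 + k1 + k2"
  let ?L = "{x \<in> vecs ?n. fk k1 k2 x = j \<and> selector k1 x = 0}"
  let ?x0 = "unit_vec ?n 0 j"
  have "selector k1 ?x0 = 0" by (simp add: selector_def unit_vec_nth)
  moreover have "(\<Sum>i=10+k1..9+k1+k2. ?x0 ! i) = 0" by (simp add: unit_vec_nth)
  ultimately have "?x0 \<in> ?L" using j by (simp add: unit_vec_vecs fk_selector unit_vec_nth)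
  moreover have "finite ?L" using finite_vecs by simp
  ultimately have "card ?L \<noteq> 0" by auto
  moreover have "w \<noteq> 0" by (simp add: w_def)
  ultimately show ?thesis
    using char_sum_split[of ?n "\<lambda>x. fk k1 k2 x = j" "astar k1 k2" "\<lambda>x. selector k1 x = 0"]
      astar_active_selector astar_idle_selector by simp
qed

lemma rQ_fk:
  assumes k2: "0 < k2" and j: "j < 10"
  shows "rQ (10+k1+k2) (Qfj (fk k1 k2) j) = k2 + 1"
proof -
  let ?n = "10 + k1 + k2"
  let ?R = "{hamming \<alpha> | \<alpha>. \<alpha> \<in> vecs ?n \<and> \<alpha> \<noteq> zerovec ?n \<and> fourier ?n (Qfj (fk k1 k2) j) \<alpha> \<noteq> 0}"
  have coeff: "fourier ?n (Qfj (fk k1 k2) j) \<alpha> \<noteq> 0 \<longleftrightarrow> char_sum ?n (\<lambda>x. fk k1 k2 x = j) \<alpha> \<noteq> 0"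
    if "\<alpha> \<in> vecs ?n" "\<alpha> \<noteq> zerovec ?n" for \<alpha>
    using fourier_Qfj[OF that] by simp
  have "finite ?R"
    by (rule finite_subset[of _ "hamming ` vecs ?n"]) (auto simp: finite_vecs)
  moreover have "k2 + 1 \<in> ?R"
  proof (intro CollectI exI[of _ "astar k1 k2"] conjI)
    show "fourier ?n (Qfj (fk k1 k2) j) (astar k1 k2) \<noteq> 0"
      using coeff[OF astar_vecs astar_nonzero] astar_level_nonzero[OF j] by blast
  qed (simp_all only: hamming_astar astar_vecs astar_nonzero not_False_eq_True)
  moreover have "k2 + 1 \<le> h" if "h \<in> ?R" for h
  proof -
    obtain \<alpha> where \<alpha>: "h = hamming \<alpha>" "\<alpha> \<in> vecs ?n" "\<alpha> \<noteq> zerovec ?n"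
      "fourier ?n (Qfj (fk k1 k2) j) \<alpha> \<noteq> 0" using \<open>h \<in> ?R\<close> by blast
    show ?thesis
    proof (rule ccontr)
      assume "\<not> k2 + 1 \<le> h"
      then have "char_sum ?n (\<lambda>x. fk k1 k2 x = j) \<alpha> = 0"
        using fk_level_low_weight[OF \<alpha>(2,3) _ k2 j] \<alpha>(1) by simp
      then show False using coeff[OF \<alpha>(2,3)] \<alpha>(4) by simp
    qed
  qed
  ultimately show ?thesis unfolding rQ_def by (intro Min_eqI)
qed

lemma rf_fk:
  assumes "0 < k2"
  shows "rf (10+k1+k2) (fk k1 k2) = k2 + 1"
proof -
  have "{rQ (10+k1+k2) (Qfj (fk k1 k2) j) | j. j < dd} = {k2 + 1}"
    using rQ_fk[OF assms] by (auto simp: dd_def intro!: exI[of _ 0])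
  then show ?thesis unfolding rf_def by simp
qed

definition affine_restriction ::
    "nat \<Rightarrow> (nat list \<Rightarrow> nat) \<Rightarrow> nat set \<Rightarrow> (nat \<Rightarrow> nat) \<Rightarrow> nat \<Rightarrow> (nat \<Rightarrow> int) \<Rightarrow> int \<Rightarrow> bool" where
  "affine_restriction k f S \<alpha> dh a b \<longleftrightarrow>
     (\<forall>x\<in>vecs k. (\<forall>i\<in>S. x ! i = \<alpha> i) \<longrightarrow>
        int (f x) mod int dh = (b + (\<Sum>i\<in>{0..<k} - S. a i * int (x ! i))) mod int dh)"

lemma gf_affine_restriction:
  "gf k f = (LEAST l. \<exists>S \<alpha> dh a b. S \<subseteq> {0..<k} \<and> card S = l \<and> (\<forall>i\<in>S. \<alpha> i < dd) \<and>
      2 \<le> dh \<and> dh \<le> dd \<and> affine_restriction k f S \<alpha> dh a b)"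
  unfolding gf_def affine_restriction_def ..

lemma fk_affine_selector_fixed:
  "affine_restriction (10+k1+k2) (fk k1 k2) {10..9+k1} (\<lambda>_. 0) 10
     (\<lambda>i. if i \<in> insert 0 {10+k1..9+k1+k2} then 1 else 0) 0"
  unfolding affine_restriction_def
proof (intro ballI impI)
  let ?U = "{0..<10+k1+k2} - {10..9+k1}"
  let ?tail = "{10+k1..9+k1+k2}"
  fix x :: "nat list"
  assume "x \<in> vecs (10+k1+k2)" and "\<forall>i\<in>{10..9+k1}. x ! i = 0"
  then have "selector k1 x = 0" by (simp add: selector_def)
  then have "fk k1 k2 x = (x ! 0 + (\<Sum>i\<in>?tail. x ! i)) mod 10" by (simp add: fk_selector)
  moreover have "(\<Sum>i\<in>?U. (if i \<in> insert 0 ?tail then 1 else 0) * int (x ! i))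
      = (\<Sum>i\<in>?U. if i \<in> insert 0 ?tail then int (x ! i) else 0)"
    by (intro sum.cong refl) simp
  moreover have "\<dots> = (\<Sum>i\<in>?U \<inter> insert 0 ?tail. int (x ! i))"
    by (rule sum.inter_restrict[symmetric]) simp
  moreover have "?U \<inter> insert 0 ?tail = insert 0 ?tail" by auto
  ultimately show "int (fk k1 k2 x) mod int 10
      = (0 + (\<Sum>i\<in>?U. (if i \<in> insert 0 ?tail then 1 else 0) * int (x ! i))) mod int 10"
    by (simp add: zmod_int)
qed

lemma affine_obstruction:
  fixes F :: "nat \<Rightarrow> nat \<Rightarrow> nat" and A C b :: int
  assumes aff: "\<And>\<sigma> v. \<sigma> < 10 \<Longrightarrow> v < 10 \<Longrightarrow>
      int (F \<sigma> v) mod int dh = (b + A * int \<sigma> + C * int v) mod int dh"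
    and const: "\<sigma>0 < 10" "F \<sigma>0 0 = F \<sigma>0 1"
    and onto: "\<sigma>1 < 10" "v0 < 10" "v1 < 10" "F \<sigma>1 v0 = 0" "F \<sigma>1 v1 = 1"
    and dh: "2 \<le> dh"
  shows False
proof -
  have "(b + A * int \<sigma>0) mod int dh = (b + A * int \<sigma>0 + C) mod int dh"
    using aff[of \<sigma>0 0] aff[of \<sigma>0 1] const by simp
  then have "int dh dvd C" by (simp add: mod_eq_dvd_iff)
  then obtain q where C: "C = int dh * q" by (rule dvdE)
  have ignore_v: "int (F \<sigma>1 v) mod int dh = (b + A * int \<sigma>1) mod int dh" if "v < 10" for v
  proof -
    have "(b + A * int \<sigma>1 + C * int v) mod int dh = ((b + A * int \<sigma>1) + int dh * (q * int v)) mod int dh"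
      by (simp add: C algebra_simps)
    also have "\<dots> = (b + A * int \<sigma>1) mod int dh" by (rule mod_mult_self2)
    finally show ?thesis using aff[OF onto(1) that] by simp
  qed
  have "(0::int) mod int dh = 1 mod int dh"
    using ignore_v[OF onto(2)] ignore_v[OF onto(3)] onto(4,5) by simp
  then show False using dh by simp
qed

lemma mod_ten_surj: "T < 10 \<Longrightarrow> \<exists>\<sigma><10. (\<sigma> + R) mod 10 = (T::nat)"
proof
  assume T: "T < 10"
  let ?\<sigma> = "(T + 10 - R mod 10) mod 10"
  have "(?\<sigma> + R) mod 10 = ((T + 10 - R mod 10) + R mod 10) mod 10"
    by (simp only: mod_add_left_eq mod_add_right_eq)
  also have "(T + 10 - R mod 10) + R mod 10 = T + 10"
    using mod_less_divisor[of 10 R] by linarith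
  finally show "?\<sigma> < 10 \<and> (?\<sigma> + R) mod 10 = T" using T by simp
qed

lemma free_coordinates:
  assumes S: "S \<subseteq> {0..<n}" "card S < k1" and k1: "k1 \<le> 10"
  obtains s m where "s \<in> {10..9+k1}" "s \<notin> S" "m < 10" "m \<notin> S"
proof -
  have fin: "finite S" using S(1) finite_subset by blast
  have "\<not> {10..9+k1} \<subseteq> S" using card_mono[OF fin, of "{10..9+k1}"] S(2) by auto
  then obtain s where "s \<in> {10..9+k1}" "s \<notin> S" by blast
  moreover have "\<not> {0..<10} \<subseteq> S" using card_mono[OF fin, of "{0..<10}"] S(2) k1 by auto
  then obtain m where "m \<in> {0..<10}" "m \<notin> S" by blast
  ultimately show ?thesis using that by simp
qed

definition test_vec :: "nat \<Rightarrow> nat set \<Rightarrow> (nat \<Rightarrow> nat) \<Rightarrow> nat \<Rightarrow> nat \<Rightarrow> nat \<Rightarrow> nat \<Rightarrow> nat list" where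
  "test_vec n S \<alpha> s m \<sigma> v =
     map (\<lambda>i. if i \<in> S then \<alpha> i else if i = s then \<sigma> else if i = m then v else 0) [0..<n]"

lemma test_vec_nth:
  "i < n \<Longrightarrow> test_vec n S \<alpha> s m \<sigma> v ! i
     = (if i \<in> S then \<alpha> i else if i = s then \<sigma> else if i = m then v else 0)"
  by (simp add: test_vec_def)

lemma test_vec_affine:
  assumes aff: "affine_restriction n f S \<alpha> dh a b"
    and S: "S \<subseteq> {0..<n}" "\<forall>i\<in>S. \<alpha> i < dd"
    and sm: "s < n" "m < n" "s \<notin> S" "m \<notin> S" "s \<noteq> m" and \<sigma>v: "\<sigma> < 10" "v < 10"
  shows "int (f (test_vec n S \<alpha> s m \<sigma> v)) mod int dh = (b + a s * int \<sigma> + a m * int v) mod int dh"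
proof -
  let ?x = "test_vec n S \<alpha> s m \<sigma> v"
  have "?x \<in> vecs n" using S(2) \<sigma>v by (auto simp: test_vec_def vecs_def dd_def)
  moreover have "\<forall>i\<in>S. ?x ! i = \<alpha> i" using S(1) by (auto simp: test_vec_nth)
  moreover have "(\<Sum>i\<in>{0..<n} - S. a i * int (?x ! i))
      = (\<Sum>i\<in>{0..<n} - S. (if i = s then a s * int \<sigma> else 0) + (if i = m then a m * int v else 0))"
    using sm by (intro sum.cong refl) (auto simp: test_vec_nth)
  moreover have "\<dots> = a s * int \<sigma> + a m * int v" using sm by (simp add: sum.distrib)
  ultimately show ?thesis using aff unfolding affine_restriction_def by (simp add: add.assoc)
qed

lemma fk_test_vec:
  assumes s: "s \<in> {10..9+k1}" "s \<notin> S" and m: "m < 10"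
  obtains R B where "\<And>\<sigma> v. fk k1 k2 (test_vec (10+k1+k2) S \<alpha> s m \<sigma> v)
      = (test_vec (10+k1+k2) S \<alpha> s m \<sigma> v ! ((\<sigma> + R) mod 10) + B) mod 10"
proof -
  let ?x = "test_vec (10+k1+k2) S \<alpha> s m"
  let ?base = "\<lambda>i. if i \<in> S then \<alpha> i else 0"
  define R where "R = (\<Sum>i\<in>{10..9+k1} - {s}. ?base i)"
  define B where "B = (\<Sum>i\<in>{10+k1..9+k1+k2}. ?base i)"
  have "selector k1 (?x \<sigma> v) = (\<sigma> + R) mod 10" for \<sigma> v
  proof -
    have "(\<Sum>i\<in>{10..9+k1}. ?x \<sigma> v ! i) = ?x \<sigma> v ! s + (\<Sum>i\<in>{10..9+k1} - {s}. ?x \<sigma> v ! i)"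
      using s by (intro sum.remove) auto
    also have "(\<Sum>i\<in>{10..9+k1} - {s}. ?x \<sigma> v ! i) = R"
      unfolding R_def using m by (intro sum.cong refl) (auto simp: test_vec_nth)
    finally show ?thesis using s by (auto simp: selector_def test_vec_nth)
  qed
  moreover have "(\<Sum>i=10+k1..9+k1+k2. ?x \<sigma> v ! i) = B" for \<sigma> v
    unfolding B_def using s m by (intro sum.cong refl) (auto simp: test_vec_nth)
  ultimately show ?thesis using that by (simp add: fk_selector)
qed

(* Lower bound: steering the selector away from m makes f ignore v, steering it to m
   makes f = v + B mod 10; by affine_obstruction no restriction with |S| < k1 is affine. *)
lemma fk_not_affine:
  assumes k1: "k1 \<le> 10" and S: "S \<subseteq> {0..<10+k1+k2}" "card S < k1" "\<forall>i\<in>S. \<alpha> i < dd"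
    and dh: "2 \<le> dh"
  shows "\<not> affine_restriction (10+k1+k2) (fk k1 k2) S \<alpha> dh a b"
proof
  assume aff: "affine_restriction (10+k1+k2) (fk k1 k2) S \<alpha> dh a b"
  obtain s m where s: "s \<in> {10..9+k1}" "s \<notin> S" and m: "m < 10" "m \<notin> S"
    using free_coordinates[OF S(1,2) k1] by metis
  define F where "F \<sigma> v = fk k1 k2 (test_vec (10+k1+k2) S \<alpha> s m \<sigma> v)" for \<sigma> v
  obtain R B where F_eq: "\<And>\<sigma> v. F \<sigma> v
      = (test_vec (10+k1+k2) S \<alpha> s m \<sigma> v ! ((\<sigma> + R) mod 10) + B) mod 10"
    using fk_test_vec[OF s m(1)] unfolding F_def by metis
  have low: "test_vec (10+k1+k2) S \<alpha> s m \<sigma> v ! i = (if i \<in> S then \<alpha> i else if i = m then v else 0)"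
    if "i < 10" for \<sigma> v i
    using that s by (simp add: test_vec_nth)
  have F_aff: "int (F \<sigma> v) mod int dh = (b + a s * int \<sigma> + a m * int v) mod int dh"
    if "\<sigma> < 10" "v < 10" for \<sigma> v
    unfolding F_def using s m that by (intro test_vec_affine[OF aff S(1,3)]) auto
  define m' where "m' = (if m = 0 then 1 else (0::nat))"
  have "m' < 10" by (simp add: m'_def)
  then obtain \<sigma>0 where \<sigma>0: "\<sigma>0 < 10" "(\<sigma>0 + R) mod 10 = m'"
    using mod_ten_surj by blast
  obtain \<sigma>1 where \<sigma>1: "\<sigma>1 < 10" "(\<sigma>1 + R) mod 10 = m"
    using mod_ten_surj[OF m(1)] by blast
  obtain v0 where v0: "v0 < 10" "(v0 + B) mod 10 = 0" using mod_ten_surj[of 0 B] by auto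
  obtain v1 where v1: "v1 < 10" "(v1 + B) mod 10 = 1" using mod_ten_surj[of 1 B] by auto
  have "F \<sigma>0 0 = F \<sigma>0 1" unfolding F_eq \<sigma>0(2) by (simp add: low m'_def)
  moreover have "F \<sigma>1 v0 = 0" "F \<sigma>1 v1 = 1" unfolding F_eq \<sigma>1(2) using m v0 v1 by (simp_all add: low)
  ultimately show False
    using affine_obstruction[OF F_aff \<sigma>0(1) _ \<sigma>1(1) v0(1) v1(1) _ _ dh] by blast
qed

lemma gf_fk:
  assumes "0 < k1" "k1 \<le> 10"
  shows "gf (10+k1+k2) (fk k1 k2) = k1"
  unfolding gf_affine_restriction
proof (rule Least_equality)
  show "\<exists>S \<alpha> dh a b. S \<subseteq> {0..<10+k1+k2} \<and> card S = k1 \<and> (\<forall>i\<in>S. \<alpha> i < dd) \<and>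
      2 \<le> dh \<and> dh \<le> dd \<and> affine_restriction (10+k1+k2) (fk k1 k2) S \<alpha> dh a b"
    using fk_affine_selector_fixed[of k1 k2]
    by (intro exI[of _ "{10..9+k1}"] exI[of _ "\<lambda>_. 0 :: nat"] exI[of _ "10 :: nat"]
        exI[of _ "\<lambda>i. if i \<in> insert 0 {10+k1..9+k1+k2} then 1 else 0 :: int"] exI[of _ "0 :: int"])
      (auto simp: dd_def)
next
  fix l
  assume "\<exists>S \<alpha> dh a b. S \<subseteq> {0..<10+k1+k2} \<and> card S = l \<and> (\<forall>i\<in>S. \<alpha> i < dd) \<and>
      2 \<le> dh \<and> dh \<le> dd \<and> affine_restriction (10+k1+k2) (fk k1 k2) S \<alpha> dh a b"
  then show "k1 \<le> l" using fk_not_affine[OF assms(2)] by (meson not_le)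
qed

theorem claim1:
  fixes k1 k2 :: nat
  assumes "0 < k1" and "k1 \<le> 10" and "0 < k2"
  shows "gf (10 + k1 + k2) (fk k1 k2) = k1
       \<and> rf (10 + k1 + k2) (fk k1 k2) = k2 + 1
       \<and> sf (10 + k1 + k2) (fk k1 k2) = min ((real k2 + 1) / 2) (real k1 + 1)"
proof -
  have g: "gf (10 + k1 + k2) (fk k1 k2) = k1" using gf_fk[OF assms(1,2)] .
  have r: "rf (10 + k1 + k2) (fk k1 k2) = k2 + 1" using rf_fk[OF assms(3)] .
  then have "sf (10 + k1 + k2) (fk k1 k2) = min ((real k2 + 1) / 2) (real k1 + 1)"
    unfolding sf_def g by (simp add: add.commute)
  with g r show ?thesis by blast
qed

end
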